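(* Let $\succ$ be a binary relation on $\mathcal{F}$ satisfying Axioms A1–A7 below, and define $\succsim$ on $X$ by $x\succsim y$ iff $y\not\succ x$. Then for all $f\in\mathcal{F}$ and $x,y\in X$, if $f\succ x$ and $x\succsim y$, then $f\succ y$. Axioms: (A1) $\succ$ is asymmetric and transitive, and its restriction to $X$ is non-trivial and negatively transitive. (A2) For all $f,g,h\in\mathcal{F}$, $\{\alpha\in[0,1]:\alpha f+(1-\alpha)g\succ h\}$ and $\{\alpha\in[0,1]:h\succ\alpha f+(1-\alpha)g\}$ are open in $[0,1]$. (A3) For all $f,g\in\mathcal{F}$, $x\in X$, $\alpha\in(0,1)$: $f\succ g$ iff $\alpha f+(1-\alpha)x\succ\alpha g+(1-\alpha)x$. (A4) For all $x\in X$, $\{f:f\succ x\}$ and $\{f:x\succ f\}$ are convex. (A5) If $f(s)\succ g(s)$ for all $s\in S$ then $f\succ g$. (A6) If for all $x\in X$, $f\Join x$ implies $g\Join x$, then $f\Join g$. (A7) If $f\Join x$, $x\succ g$, $g\Join y$, $f\succ y$ (with $x,y\in X$), then $f\succ g$.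
   Context: $S$ is a set of states with algebra $\Sigma$; $X$ is a non-singleton convex subset of a real vector space; $\mathcal{F}$ is the set of simple acts $f:S\to X$ ($\Sigma$-measurable, finitely many values) with pointwise mixtures; elements of $X$ are identified with constant acts. $f\Join g$ means $f\not\succ g$ and $g\not\succ f$. *)

theory Defs
  imports "HOL-Analysis.Analysis"
begin

text \<open>Simple acts: Sigma-measurable maps S -> X with finitely many values.
  The state space S is the whole type 'a; Sigma is an algebra on UNIV.\<close>
definition simple_acts :: "'a set set \<Rightarrow> 'b::real_vector set \<Rightarrow> ('a \<Rightarrow> 'b) set" where
  "simple_acts \<Sigma> X = {f. range f \<subseteq> X \<and> finite (range f) \<and> (\<forall>x. f -` {x} \<in> \<Sigma>)}"

definition mix :: "real \<Rightarrow> ('a \<Rightarrow> 'b::real_vector) \<Rightarrow> ('a \<Rightarrow> 'b) \<Rightarrow> ('a \<Rightarrow> 'b)" where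
  "mix \<alpha> f g = (\<lambda>s. \<alpha> *\<^sub>R f s + (1 - \<alpha>) *\<^sub>R g s)"

definition const_act :: "'b \<Rightarrow> ('a \<Rightarrow> 'b)" where
  "const_act x = (\<lambda>_. x)"

definition incomp :: "(('a \<Rightarrow> 'b) \<Rightarrow> ('a \<Rightarrow> 'b) \<Rightarrow> bool) \<Rightarrow> ('a \<Rightarrow> 'b) \<Rightarrow> ('a \<Rightarrow> 'b) \<Rightarrow> bool" where
  "incomp P f g \<longleftrightarrow> \<not> P f g \<and> \<not> P g f"

definition A1 where
  "A1 \<Sigma> X P \<longleftrightarrow>
     (\<forall>f\<in>simple_acts \<Sigma> X. \<forall>g\<in>simple_acts \<Sigma> X. P f g \<longrightarrow> \<not> P g f) \<and>
     (\<forall>f\<in>simple_acts \<Sigma> X. \<forall>g\<in>simple_acts \<Sigma> X. \<forall>h\<in>simple_acts \<Sigma> X.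
         P f g \<and> P g h \<longrightarrow> P f h) \<and>
     (\<exists>x\<in>X. \<exists>y\<in>X. P (const_act x) (const_act y)) \<and>
     (\<forall>x\<in>X. \<forall>y\<in>X. \<forall>z\<in>X.
         \<not> P (const_act x) (const_act y) \<and> \<not> P (const_act y) (const_act z)
           \<longrightarrow> \<not> P (const_act x) (const_act z))"

definition A2 where
  "A2 \<Sigma> X P \<longleftrightarrow>
     (\<forall>f\<in>simple_acts \<Sigma> X. \<forall>g\<in>simple_acts \<Sigma> X. \<forall>h\<in>simple_acts \<Sigma> X.
        openin (top_of_set {0..1::real}) {\<alpha>\<in>{0..1}. P (mix \<alpha> f g) h} \<and>
        openin (top_of_set {0..1::real}) {\<alpha>\<in>{0..1}. P h (mix \<alpha> f g)})"

definition A3 where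
  "A3 \<Sigma> X P \<longleftrightarrow>
     (\<forall>f\<in>simple_acts \<Sigma> X. \<forall>g\<in>simple_acts \<Sigma> X. \<forall>x\<in>X. \<forall>\<alpha>\<in>{0<..<1::real}.
        P f g \<longleftrightarrow> P (mix \<alpha> f (const_act x)) (mix \<alpha> g (const_act x)))"

definition convex_acts :: "('a \<Rightarrow> 'b::real_vector) set \<Rightarrow> bool" where
  "convex_acts A \<longleftrightarrow> (\<forall>f\<in>A. \<forall>g\<in>A. \<forall>\<alpha>\<in>{0..1::real}. mix \<alpha> f g \<in> A)"

definition A4 where
  "A4 \<Sigma> X P \<longleftrightarrow>
     (\<forall>x\<in>X. convex_acts {f\<in>simple_acts \<Sigma> X. P f (const_act x)} \<and>
             convex_acts {f\<in>simple_acts \<Sigma> X. P (const_act x) f})"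

definition A5 where
  "A5 \<Sigma> X P \<longleftrightarrow>
     (\<forall>f\<in>simple_acts \<Sigma> X. \<forall>g\<in>simple_acts \<Sigma> X.
        (\<forall>s. P (const_act (f s)) (const_act (g s))) \<longrightarrow> P f g)"

definition A6 where
  "A6 \<Sigma> X P \<longleftrightarrow>
     (\<forall>f\<in>simple_acts \<Sigma> X. \<forall>g\<in>simple_acts \<Sigma> X.
        (\<forall>x\<in>X. incomp P f (const_act x) \<longrightarrow> incomp P g (const_act x)) \<longrightarrow> incomp P f g)"

definition A7 where
  "A7 \<Sigma> X P \<longleftrightarrow>
     (\<forall>f\<in>simple_acts \<Sigma> X. \<forall>g\<in>simple_acts \<Sigma> X. \<forall>x\<in>X. \<forall>y\<in>X.
        incomp P f (const_act x) \<and> P (const_act x) g \<and> incomp P g (const_act y) \<and> P f (const_act y)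
          \<longrightarrow> P f g)"

definition weak_pref where
  "weak_pref P x y \<longleftrightarrow> \<not> P (const_act y) (const_act x)"

end

theory Submission
  imports Defs
begin

text \<open>If \<open>x \<succ> y\<close> the claim is transitivity. Otherwise \<open>x \<Join> y\<close>. As \<open>f \<succ> x\<close>, A6 yields a
  constant \<open>z\<close> with \<open>f \<Join> z\<close> but not \<open>x \<Join> z\<close>; \<open>x \<succ> z\<close> would give \<open>f \<succ> z\<close>, so \<open>z \<succ> x\<close>, hence
  \<open>z \<succ> y\<close> by negative transitivity, and A7 applied to \<open>f \<Join> z \<succ> y \<Join> x\<close>, \<open>f \<succ> x\<close> gives \<open>f \<succ> y\<close>.\<close>

lemma const_act_in_simple_acts:
  fixes \<Sigma> :: "'a set set" and X :: "'b::real_vector set"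
  assumes "algebra UNIV \<Sigma>" and "z \<in> X"
  shows "const_act z \<in> simple_acts \<Sigma> X"
proof -
  interpret algebra UNIV \<Sigma> by (rule assms(1))
  have "(const_act z :: 'a \<Rightarrow> 'b) -` {w} = (if w = z then UNIV else {})" for w
    by (auto simp: const_act_def)
  then have "(const_act z :: 'a \<Rightarrow> 'b) -` {w} \<in> \<Sigma>" for w using top by simp
  moreover have "range (const_act z :: 'a \<Rightarrow> 'b) = {z}" by (auto simp: const_act_def)
  ultimately show ?thesis using assms(2) by (simp add: simple_acts_def)
qed

lemma A1_trans:
  assumes "A1 \<Sigma> X P"
    and "f \<in> simple_acts \<Sigma> X" "g \<in> simple_acts \<Sigma> X" "h \<in> simple_acts \<Sigma> X"
    and "P f g" "P g h"
  shows "P f h"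
  using assms unfolding A1_def by blast

lemma A1_const_neg_trans:
  assumes "A1 \<Sigma> X P" and "x \<in> X" "y \<in> X" "z \<in> X"
    and "P (const_act x) (const_act z)"
  shows "P (const_act x) (const_act y) \<or> P (const_act y) (const_act z)"
  using assms unfolding A1_def by blast

lemma A6_obtain_separating_const:
  assumes "A6 \<Sigma> X P" and "f \<in> simple_acts \<Sigma> X" "g \<in> simple_acts \<Sigma> X"
    and "\<not> incomp P f g"
  obtains z where "z \<in> X" "incomp P f (const_act z)" "\<not> incomp P g (const_act z)"
  using assms unfolding A6_def by blast

lemma pref_const_weak_pref_trans:
  assumes \<Sigma>: "algebra UNIV \<Sigma>"
    and A1: "A1 \<Sigma> X P" and A6: "A6 \<Sigma> X P" and A7: "A7 \<Sigma> X P"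
    and f: "f \<in> simple_acts \<Sigma> X" and x: "x \<in> X" and y: "y \<in> X"
    and fx: "P f (const_act x)" and "weak_pref P x y"
  shows "P f (const_act y)"
proof -
  have cx: "const_act x \<in> simple_acts \<Sigma> X" and cy: "const_act y \<in> simple_acts \<Sigma> X"
    using const_act_in_simple_acts \<Sigma> x y by blast+
  have not_yx: "\<not> P (const_act y) (const_act x)"
    using \<open>weak_pref P x y\<close> by (simp add: weak_pref_def)
  show ?thesis
  proof (cases "P (const_act x) (const_act y)")
    case True
    with A1 f cx cy fx show ?thesis by (rule A1_trans[of \<Sigma> X P])
  next
    case False
    have "\<not> incomp P f (const_act x)" using fx by (simp add: incomp_def)
    then obtain z where z: "z \<in> X" and fz: "incomp P f (const_act z)"
      and not_xz: "\<not> incomp P (const_act x) (const_act z)"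
      using A6_obtain_separating_const[OF A6 f cx] by blast
    have "\<not> P (const_act x) (const_act z)"
    proof
      assume "P (const_act x) (const_act z)"
      with A1 f cx const_act_in_simple_acts[OF \<Sigma> z] fx have "P f (const_act z)"
        by (rule A1_trans[of \<Sigma> X P])
      with fz show False by (simp add: incomp_def)
    qed
    then have "P (const_act z) (const_act x)" using not_xz by (simp add: incomp_def)
    then have zy: "P (const_act z) (const_act y)"
      using A1_const_neg_trans[OF A1 z y x] not_yx by blast
    have "incomp P (const_act y) (const_act x)" using False not_yx by (simp add: incomp_def)
    with A7 f cy z fz zy x fx show ?thesis unfolding A7_def by blast
  qed
qed

theorem lemma3:
  fixes \<Sigma> :: "'a set set" and X :: "'b::real_vector set"
    and P :: "('a \<Rightarrow> 'b) \<Rightarrow> ('a \<Rightarrow> 'b) \<Rightarrow> bool"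
  assumes "algebra UNIV \<Sigma>"
    and "convex X" and "\<exists>x\<in>X. \<exists>y\<in>X. x \<noteq> y"
    and "A1 \<Sigma> X P" and "A2 \<Sigma> X P" and "A3 \<Sigma> X P" and "A4 \<Sigma> X P"
    and "A5 \<Sigma> X P" and "A6 \<Sigma> X P" and "A7 \<Sigma> X P"
    and "f \<in> simple_acts \<Sigma> X" and "x \<in> X" and "y \<in> X"
    and "P f (const_act x)" and "weak_pref P x y"
  shows "P f (const_act y)"
  using assms(1,4,9-15) by (rule pref_const_weak_pref_trans)

end
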